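(* Let $\ell\ge4$ be such that $T_\ell$ is long, let $t\in\mathring T_\ell$, and let $\tau\in\mathbb{C}$ with $|\tau-t|<1/\sqrt{B(t)}$. Then for every $s$ with $4<s<B^{1/6}(t)$, \[ \left|\sum_{k\ge0:\,|k-A(t)|>s\sqrt{B(t)}}a_k^2e^{k\tau}\right|\le2H(\mathrm{Re}\,\tau)\exp\left(-\tfrac18(s-4)^2\right). \]
   Context: Let $G(z)=\sum_{n\ge0}a_n^2z^n$ be an entire function with $a_n\ge0$, infinitely many non-zero. Put $H(t)=G(e^t)=\sum a_n^2e^{nt}$, $A(t)=H'(t)/H(t)$, $B(t)=A'(t)$, and assume $B$ is non-decreasing and unbounded on $\mathbb{R}$. Choose points $t_\ell\uparrow\infty$ with $B(t_\ell)=\ell^6$ (for all $\ell$ for which this is possible), and set $T_\ell=[t_\ell,t_{\ell+1}]$. $T_\ell$ is called long if $t_{\ell+1}-t_\ell\ge8/\ell^2$, and then its interior is $\mathring T_\ell=[t_\ell+2/\ell^2,\,t_{\ell+1}-2/\ell^2]$. *)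

theory Defs
  imports "HOL-Analysis.Analysis"
begin

definition H :: "(nat \<Rightarrow> real) \<Rightarrow> real \<Rightarrow> real" where
  "H a t = (\<Sum>n. (a n)\<^sup>2 * exp (real n * t))"

definition A :: "(nat \<Rightarrow> real) \<Rightarrow> real \<Rightarrow> real" where
  "A a t = deriv (H a) t / H a t"

definition B :: "(nat \<Rightarrow> real) \<Rightarrow> real \<Rightarrow> real" where
  "B a t = deriv (A a) t"

definition entire_coeffs :: "(nat \<Rightarrow> real) \<Rightarrow> bool" where
  "entire_coeffs a \<longleftrightarrow> (\<forall>z::complex. summable (\<lambda>n. complex_of_real ((a n)\<^sup>2) * z ^ n))"

end

theory Submission
  imports Defs
begin

(* Exponential tilting. For x = Re tau and theta > 0, every term of the tail with
   k - A(t) > s sqrt(B(t)) is at most exp(theta (k - A(t) - s sqrt(B(t)))) times itself, and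
   symmetrically for A(t) - k > s sqrt(B(t)); summing, the tail is bounded by
   exp(-theta (A(t) + s sqrt(B(t)))) H(x + theta) + exp(theta (A(t) - s sqrt(B(t)))) H(x - theta).
   Since (ln H)' = A and A' = B, Taylor's formula bounds H(x +- theta) by
   H(x) exp(+-theta A(t) + theta |x - t| M + theta^2 M / 2), with M an upper bound for B near t.
   When T_l is long and t lies in its interior, the window |u - t| <= s / sqrt(B(t)) stays
   inside T_l, where l^6 <= B <= (l+1)^6 <= 4 B(t); so M = 4 B(t) works, and the choice
   theta = (s - 4) / (4 sqrt(B(t))) makes the total exponent -(s - 4)^2 / 8. *)

definition exp_series :: "(nat \<Rightarrow> real) \<Rightarrow> real \<Rightarrow> real" where
  "exp_series w t = (\<Sum>n. w n * exp (real n * t))"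

lemma summable_exp_series:
  assumes "\<And>y::real. summable (\<lambda>n. w n * y ^ n)"
  shows "summable (\<lambda>n. w n * exp (real n * t))"
  using assms[of "exp t"] by (simp add: exp_of_nat_mult)

lemma summable_power_series_times_index:
  assumes "\<And>y::real. summable (\<lambda>n. w n * y ^ n)"
  shows "summable (\<lambda>n. (real n * w n) * y ^ n)"
proof -
  have "summable (\<lambda>n. y * (diffs w n * y ^ n))"
    using termdiff_converges_all[OF assms] by (rule summable_mult)
  then have "summable (\<lambda>n. (real (Suc n) * w (Suc n)) * y ^ Suc n)"
    by (simp add: diffs_def algebra_simps)
  then show ?thesis by (rule summable_Suc_iff[THEN iffD1])
qed

lemma exp_series_has_real_derivative:
  assumes "\<And>y::real. summable (\<lambda>n. w n * y ^ n)"
  shows "(exp_series w has_real_derivative exp_series (\<lambda>n. real n * w n) t) (at t)"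
proof -
  let ?f = "\<lambda>n. (real n * w n) * exp t ^ n"
  have "((\<lambda>t. \<Sum>n. w n * exp t ^ n) has_real_derivative
          (\<Sum>n. diffs w n * exp t ^ n) * exp t) (at t)"
    by (rule DERIV_chain2[OF termdiffs_strong_converges_everywhere[OF assms] DERIV_exp])
  moreover have "(\<Sum>n. diffs w n * exp t ^ n) * exp t = (\<Sum>n. ?f (Suc n))"
    using termdiff_converges_all[OF assms, of "exp t"]
    by (subst suminf_mult2) (auto simp: diffs_def algebra_simps)
  moreover have "(\<Sum>n. ?f (Suc n)) = exp_series (\<lambda>n. real n * w n) t"
    using suminf_split_head[OF summable_power_series_times_index[OF assms], of "exp t"]
    by (simp add: exp_series_def exp_of_nat_mult)
  ultimately show ?thesis
    by (simp add: exp_series_def[abs_def] exp_of_nat_mult)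
qed

lemma taylor_second_order_upper_bound:
  fixes f f' f'' :: "real \<Rightarrow> real"
  assumes f': "\<And>u. (f has_real_derivative f' u) (at u)"
    and f'': "\<And>u. (f' has_real_derivative f'' u) (at u)"
    and M: "\<And>u. min x y \<le> u \<Longrightarrow> u \<le> max x y \<Longrightarrow> f'' u \<le> M"
  shows "f y \<le> f x + (y - x) * f' x + (y - x)\<^sup>2 / 2 * M"
proof (cases "y = x")
  case False
  define d where "d = (\<lambda>m::nat. if m = 0 then f else if m = 1 then f' else f'')"
  have "\<exists>\<xi>. (if y < x then y < \<xi> \<and> \<xi> < x else x < \<xi> \<and> \<xi> < y) \<and>
      f y = (\<Sum>m<2. d m x / fact m * (y - x) ^ m) + d 2 \<xi> / fact 2 * (y - x) ^ 2"
    by (rule Taylor[of 2 d f "min x y" "max x y"])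
      (use False f' f'' in \<open>auto simp: d_def less_2_cases_iff\<close>)
  then obtain \<xi> where "if y < x then y < \<xi> \<and> \<xi> < x else x < \<xi> \<and> \<xi> < y"
    and "f y = (\<Sum>m<2. d m x / fact m * (y - x) ^ m) + d 2 \<xi> / fact 2 * (y - x) ^ 2"
    by blast
  moreover from this(1) have \<xi>: "min x y \<le> \<xi>" "\<xi> \<le> max x y"
    by (auto split: if_splits)
  ultimately have taylor: "f y = f x + (y - x) * f' x + (y - x)\<^sup>2 / 2 * f'' \<xi>"
    by (simp add: d_def numeral_2_eq_2 lessThan_Suc)
  have "(y - x)\<^sup>2 / 2 * f'' \<xi> \<le> (y - x)\<^sup>2 / 2 * M"
    using M[OF \<xi>] by (intro mult_left_mono) auto
  then show ?thesis using taylor by linarith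
qed simp

lemma continuous_unbounded_above_attains:
  fixes f :: "real \<Rightarrow> real"
  assumes "continuous_on UNIV f" "\<not> bdd_above (range f)" "f x \<le> v"
  shows "\<exists>y. f y = v"
proof -
  obtain z where "v \<le> f z"
    using assms(2) by (meson bdd_above.I2 linorder_linear)
  then have "v \<in> range f"
    using connectedD_interval[OF connected_continuous_image[OF assms(1) connected_UNIV]] assms(3)
    by blast
  then show ?thesis by auto
qed

locale nontrivial_entire_coeffs =
  fixes a :: "nat \<Rightarrow> real"
  assumes entire: "entire_coeffs a"
    and nontrivial: "\<exists>n. a n \<noteq> 0"
begin

abbreviation "H' \<equiv> exp_series (\<lambda>n. real n * (a n)\<^sup>2)"
abbreviation "H'' \<equiv> exp_series (\<lambda>n. real n * (real n * (a n)\<^sup>2))"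

lemma summable_squares_power: "summable (\<lambda>n. (a n)\<^sup>2 * y ^ n)"
proof -
  have "summable (\<lambda>n. complex_of_real ((a n)\<^sup>2 * y ^ n))"
    using entire[unfolded entire_coeffs_def, rule_format, of "complex_of_real y"] by simp
  then show ?thesis by (simp only: summable_complex_of_real)
qed

lemma H_eq_exp_series: "H a = exp_series (\<lambda>n. (a n)\<^sup>2)"
  by (simp add: fun_eq_iff H_def exp_series_def)

lemma summable_H: "summable (\<lambda>n. (a n)\<^sup>2 * exp (real n * t))"
  by (rule summable_exp_series[OF summable_squares_power])

lemma H_has_real_derivative: "(H a has_real_derivative H' t) (at t)"
  unfolding H_eq_exp_series
  by (rule exp_series_has_real_derivative[OF summable_squares_power])

lemma H'_has_real_derivative: "(H' has_real_derivative H'' t) (at t)"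
  by (rule exp_series_has_real_derivative
      [OF summable_power_series_times_index[OF summable_squares_power]])

lemma H_pos: "0 < H a t"
proof -
  obtain m where "a m \<noteq> 0" using nontrivial by blast
  then have "0 < (\<Sum>n\<in>{m}. (a n)\<^sup>2 * exp (real n * t))" by simp
  also have "\<dots> \<le> H a t"
    unfolding H_def by (rule sum_le_suminf[OF summable_H]) auto
  finally show ?thesis .
qed

lemma A_eq: "A a t = H' t / H a t"
  unfolding A_def using DERIV_imp_deriv[OF H_has_real_derivative] by simp

lemma B_eq: "B a t = (H'' t * H a t - (H' t)\<^sup>2) / (H a t)\<^sup>2"
proof -
  have "(A a has_real_derivative (H'' t * H a t - H' t * H' t) / (H a t * H a t)) (at t)"
    unfolding A_eq[abs_def]
    using DERIV_divide[OF H'_has_real_derivative H_has_real_derivative] H_pos[of t] by simp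
  then show ?thesis
    unfolding B_def by (simp add: DERIV_imp_deriv power2_eq_square)
qed

lemma A_has_real_derivative: "(A a has_real_derivative B a t) (at t)"
  unfolding A_eq[abs_def] B_eq
  using DERIV_divide[OF H'_has_real_derivative H_has_real_derivative] H_pos[of t]
  by (simp add: power2_eq_square)

lemma continuous_on_B: "continuous_on S (B a)"
proof -
  have "isCont (B a) t" for t
    unfolding B_eq[abs_def]
    using H_pos[of t] DERIV_isCont[OF H_has_real_derivative] DERIV_isCont[OF H'_has_real_derivative]
      DERIV_isCont[OF exp_series_has_real_derivative[OF summable_power_series_times_index
        [OF summable_power_series_times_index[OF summable_squares_power]]]]
    by (intro continuous_intros) auto
  then show ?thesis by (simp add: continuous_at_imp_continuous_on)
qed

lemma ln_H_has_real_derivative: "((\<lambda>u. ln (H a u)) has_real_derivative A a t) (at t)"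
  using DERIV_chain2[OF DERIV_ln_divide[OF H_pos] H_has_real_derivative] by (simp add: A_eq)

lemma ln_H_le_second_order:
  assumes "\<And>u. min x y \<le> u \<Longrightarrow> u \<le> max x y \<Longrightarrow> B a u \<le> M"
  shows "ln (H a y) \<le> ln (H a x) + (y - x) * A a x + (y - x)\<^sup>2 / 2 * M"
  by (rule taylor_second_order_upper_bound[OF ln_H_has_real_derivative A_has_real_derivative assms])

lemma A_lipschitz:
  assumes "\<And>u. min x y \<le> u \<Longrightarrow> u \<le> max x y \<Longrightarrow> \<bar>B a u\<bar> \<le> M"
  shows "\<bar>A a y - A a x\<bar> \<le> M * \<bar>y - x\<bar>"
  using field_differentiable_bound[of "{min x y..max x y}" "A a" "B a" M y x]
    A_has_real_derivative assms
  by (auto simp: has_field_derivative_at_within)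

lemma H_shift_le:
  assumes B_bound: "\<And>u. \<bar>u - t\<bar> \<le> R \<Longrightarrow> \<bar>B a u\<bar> \<le> M"
    and near: "\<bar>x - t\<bar> + \<bar>h\<bar> \<le> R"
  shows "H a (x + h) \<le> H a x * exp (h * A a t + \<bar>h\<bar> * \<bar>x - t\<bar> * M + h\<^sup>2 / 2 * M)"
proof -
  have "\<bar>B a u\<bar> \<le> M" if "min x (x + h) \<le> u" "u \<le> max x (x + h)" for u
    using that near by (intro B_bound) linarith
  then have taylor: "ln (H a (x + h)) \<le> ln (H a x) + h * A a x + h\<^sup>2 / 2 * M"
    using ln_H_le_second_order[of x "x + h" M] by force
  have "\<bar>B a u\<bar> \<le> M" if "min t x \<le> u" "u \<le> max t x" for u
    using that near by (intro B_bound) linarith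
  then have "\<bar>A a x - A a t\<bar> \<le> M * \<bar>x - t\<bar>"
    using A_lipschitz[of t x M] by blast
  then have "\<bar>h\<bar> * \<bar>A a x - A a t\<bar> \<le> \<bar>h\<bar> * (M * \<bar>x - t\<bar>)"
    by (rule mult_left_mono) simp
  moreover have "h * (A a x - A a t) \<le> \<bar>h\<bar> * \<bar>A a x - A a t\<bar>"
    by (simp add: abs_mult[symmetric])
  ultimately have "h * A a x \<le> h * A a t + \<bar>h\<bar> * \<bar>x - t\<bar> * M"
    by (simp add: algebra_simps)
  with taylor have "ln (H a (x + h)) \<le> ln (H a x) + (h * A a t + \<bar>h\<bar> * \<bar>x - t\<bar> * M + h\<^sup>2 / 2 * M)"
    by linarith
  then have "exp (ln (H a (x + h))) \<le> exp (ln (H a x)) * exp (h * A a t + \<bar>h\<bar> * \<bar>x - t\<bar> * M + h\<^sup>2 / 2 * M)"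
    by (simp flip: exp_add)
  then show ?thesis
    using H_pos by simp
qed

lemma norm_tail_le_tilted:
  assumes "0 < \<theta>"
  shows "cmod (\<Sum>k. if r < \<bar>real k - c\<bar>
                   then complex_of_real ((a k)\<^sup>2) * exp (of_nat k * \<tau>) else 0)
         \<le> exp (- \<theta> * (c + r)) * H a (Re \<tau> + \<theta>) + exp (\<theta> * (c - r)) * H a (Re \<tau> - \<theta>)"
proof -
  define U where "U k = exp (- \<theta> * (c + r)) * ((a k)\<^sup>2 * exp (real k * (Re \<tau> + \<theta>)))
    + exp (\<theta> * (c - r)) * ((a k)\<^sup>2 * exp (real k * (Re \<tau> - \<theta>)))" for k
  have U_sum: "U sums (exp (- \<theta> * (c + r)) * H a (Re \<tau> + \<theta>) + exp (\<theta> * (c - r)) * H a (Re \<tau> - \<theta>))"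
    unfolding U_def[abs_def] H_def
    by (intro sums_add sums_mult summable_sums summable_H)
  have "cmod (if r < \<bar>real k - c\<bar> then complex_of_real ((a k)\<^sup>2) * exp (of_nat k * \<tau>) else 0)
        \<le> U k" for k
  proof (cases "r < \<bar>real k - c\<bar>")
    case True
    have norm_term: "cmod (complex_of_real ((a k)\<^sup>2) * exp (of_nat k * \<tau>)) = (a k)\<^sup>2 * exp (real k * Re \<tau>)"
      by (simp add: norm_mult norm_power)
    have "exp (real k * Re \<tau>) \<le> exp (- \<theta> * (c + r)) * exp (real k * (Re \<tau> + \<theta>))
                              + exp (\<theta> * (c - r)) * exp (real k * (Re \<tau> - \<theta>))"
    proof (cases "r < real k - c")
      case True
      then have "\<theta> * (c + r) \<le> \<theta> * real k"
        using assms by (intro mult_left_mono) auto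
      then have "exp (real k * Re \<tau>) \<le> exp (- \<theta> * (c + r)) * exp (real k * (Re \<tau> + \<theta>))"
        by (simp add: exp_add[symmetric] algebra_simps)
      then show ?thesis
        by (rule add_increasing2[rotated]) simp
    next
      case False
      then have "\<theta> * (real k + r) \<le> \<theta> * c"
        using assms \<open>r < \<bar>real k - c\<bar>\<close> by (intro mult_left_mono) auto
      then have "exp (real k * Re \<tau>) \<le> exp (\<theta> * (c - r)) * exp (real k * (Re \<tau> - \<theta>))"
        by (simp add: exp_add[symmetric] algebra_simps)
      then show ?thesis
        by (rule add_increasing[rotated]) simp
    qed
    then have "(a k)\<^sup>2 * exp (real k * Re \<tau>) \<le> (a k)\<^sup>2 * (exp (- \<theta> * (c + r)) * exp (real k * (Re \<tau> + \<theta>))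
                              + exp (\<theta> * (c - r)) * exp (real k * (Re \<tau> - \<theta>)))"
      by (rule mult_left_mono) simp_all
    also have "\<dots> = U k"
      unfolding U_def by (simp only: distrib_left mult.left_commute)
    finally show ?thesis
      using True norm_term by simp
  qed (simp add: U_def)
  from norm_suminf_le[OF this sums_summable[OF U_sum]] show ?thesis
    by (simp add: sums_unique[OF U_sum, symmetric])
qed

lemma norm_tail_le:
  assumes B_pos: "0 < B a t" and s: "4 < s"
    and near: "\<bar>Re \<tau> - t\<bar> < 1 / sqrt (B a t)"
    and window: "\<And>u. \<bar>u - t\<bar> \<le> s / sqrt (B a t) \<Longrightarrow> \<bar>B a u\<bar> \<le> 4 * B a t"
  shows "cmod (\<Sum>k. if \<bar>real k - A a t\<bar> > s * sqrt (B a t)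
                   then complex_of_real ((a k)\<^sup>2) * exp (of_nat k * \<tau>) else 0)
         \<le> 2 * H a (Re \<tau>) * exp (- ((s - 4)\<^sup>2) / 8)"
proof -
  define b where "b = sqrt (B a t)"
  define \<theta> where "\<theta> = (s - 4) / (4 * b)"
  define x where "x = Re \<tau>"
  have b: "0 < b" "b\<^sup>2 = B a t"
    using B_pos by (auto simp: b_def)
  have \<theta>: "0 < \<theta>"
    using s b by (simp add: \<theta>_def)
  have x: "\<bar>x - t\<bar> * b \<le> 1"
    using near b by (simp add: x_def b_def field_simps)
  let ?R = "\<theta> * \<bar>x - t\<bar> * (4 * B a t) + \<theta>\<^sup>2 / 2 * (4 * B a t)"
  have exponent: "?R - \<theta> * (s * b) \<le> - ((s - 4)\<^sup>2) / 8"
  proof -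
    have "\<theta> * \<bar>x - t\<bar> * (4 * B a t) = 4 * \<theta> * b * (\<bar>x - t\<bar> * b)"
      by (simp add: b(2)[symmetric] power2_eq_square)
    also have "\<dots> \<le> 4 * \<theta> * b"
      using x \<theta> b by (intro mult_left_le) auto
    finally have "\<theta> * \<bar>x - t\<bar> * (4 * B a t) \<le> 4 * \<theta> * b" .
    moreover have "4 * \<theta> * b + \<theta>\<^sup>2 / 2 * (4 * B a t) - \<theta> * (s * b) = - ((s - 4)\<^sup>2) / 8"
      using b by (simp add: \<theta>_def b(2)[symmetric] power2_eq_square field_simps)
    ultimately show ?thesis
      by linarith
  qed
  have tilt: "exp (- h * A a t - \<theta> * (s * b)) * H a (x + h) \<le> H a x * exp (- ((s - 4)\<^sup>2) / 8)"
    if h: "\<bar>h\<bar> = \<theta>" for h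
  proof -
    have "\<bar>x - t\<bar> + \<bar>h\<bar> \<le> 1 / b + (s - 4) / (4 * b)"
      using x b h by (simp add: \<theta>_def field_simps)
    also have "\<dots> = s / (4 * b)"
      using b by (simp add: field_simps)
    also have "\<dots> \<le> s / b"
      using s b by (intro divide_left_mono) auto
    finally have "\<bar>x - t\<bar> + \<bar>h\<bar> \<le> s / b" .
    then have "H a (x + h) \<le> H a x * exp (h * A a t + ?R)"
      using H_shift_le[of t "s / b" "4 * B a t" x h] window h power2_abs[of h] by (simp add: b_def add.assoc)
    then have "exp (- h * A a t - \<theta> * (s * b)) * H a (x + h)
        \<le> exp (- h * A a t - \<theta> * (s * b)) * (H a x * exp (h * A a t + ?R))"
      by (rule mult_left_mono) simp
    also have "\<dots> = H a x * exp (?R - \<theta> * (s * b))"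
      by (simp add: mult.left_commute flip: exp_add)
    also have "\<dots> \<le> H a x * exp (- ((s - 4)\<^sup>2) / 8)"
      using exponent H_pos[of x] by (intro mult_left_mono) auto
    finally show ?thesis .
  qed
  show ?thesis
    using norm_tail_le_tilted[OF \<theta>, of "s * b" "A a t" \<tau>] tilt[of \<theta>] tilt[of "- \<theta>"] \<theta>
    by (simp add: x_def b_def algebra_simps)
qed

end

lemma divide_sqrt_le_of_sixth_roots:
  fixes s L \<beta> :: real
  assumes "0 < L" "L ^ 6 \<le> \<beta>" "0 \<le> s" "s \<le> \<beta> powr (1/6)"
  shows "s / sqrt \<beta> \<le> 1 / L\<^sup>2"
proof -
  have \<beta>: "0 < \<beta>" using assms(1,2) by (meson less_le_trans zero_less_power)
  have "L ^ 6 \<le> (\<beta> powr (1/6)) ^ 6"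
    using assms(2) \<beta> by (simp add: powr_realpow[symmetric] powr_powr)
  then have "L \<le> \<beta> powr (1/6)"
    using assms(1) by simp
  then have "s * L\<^sup>2 \<le> \<beta> powr (1/6) * (\<beta> powr (1/6))\<^sup>2"
    using assms by (intro mult_mono power_mono) auto
  also have "\<dots> = sqrt \<beta>"
    using \<beta> by (simp add: power2_eq_square powr_half_sqrt[symmetric] flip: powr_add)
  finally show ?thesis
    using assms(1) \<beta> by (simp add: field_simps)
qed

lemma succ_pow6_le_four_pow6:
  fixes x :: real
  assumes "4 \<le> x"
  shows "(x + 1) ^ 6 \<le> 4 * x ^ 6"
proof -
  have "(x + 1) ^ 6 \<le> (5/4 * x) ^ 6"
    using assms by (intro power_mono) auto
  also have "\<dots> = (5/4) ^ 6 * x ^ 6"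
    by (rule power_mult_distrib)
  also have "\<dots> \<le> 4 * x ^ 6"
    using assms by (intro mult_right_mono) (auto simp: power_numeral_reduce)
  finally show ?thesis .
qed

lemma mono_window_bound:
  fixes f :: "real \<Rightarrow> real"
  assumes "mono f" "4 \<le> L" "f lo = L ^ 6" "f hi = (L + 1) ^ 6"
    and "lo + r \<le> t" "t + r \<le> hi" "\<bar>u - t\<bar> \<le> r"
  shows "\<bar>f u\<bar> \<le> 4 * f t"
proof -
  have "lo \<le> t" "lo \<le> u" "u \<le> hi"
    using assms(5-7) by linarith+
  then have "f lo \<le> f t" "f lo \<le> f u" "f u \<le> f hi"
    using monoD[OF assms(1)] by blast+
  moreover have "0 \<le> L ^ 6"
    using assms(2) by simp
  ultimately show ?thesis
    using assms(3,4) succ_pow6_le_four_pow6[OF assms(2)] by linarith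
qed

theorem lemma3p6:
  fixes a :: "nat \<Rightarrow> real" and tl :: "nat \<Rightarrow> real"
    and l :: nat and t s :: real and \<tau> :: complex
  assumes nonneg: "\<And>n. a n \<ge> 0"
    and inf_nz: "infinite {n. a n \<noteq> 0}"
    and entire: "entire_coeffs a"
    and B_mono: "mono (B a)"
    and B_unbdd: "\<not> bdd_above (range (B a))"
    and tl_def: "\<And>m. (\<exists>x. B a x = real m ^ 6) \<Longrightarrow> B a (tl m) = real m ^ 6"
    and tl_mono: "\<And>m n. m \<le> n \<Longrightarrow> (\<exists>x. B a x = real m ^ 6) \<Longrightarrow> tl m \<le> tl n"
    and tl_lim: "filterlim tl at_top sequentially"
    and l4: "l \<ge> 4"
    and l_ex: "\<exists>x. B a x = real l ^ 6"
    and long: "tl (l + 1) - tl l \<ge> 8 / (real l)\<^sup>2"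
    and t_int: "t \<in> {tl l + 2 / (real l)\<^sup>2 .. tl (l + 1) - 2 / (real l)\<^sup>2}"
    and tau: "cmod (\<tau> - complex_of_real t) < 1 / sqrt (B a t)"
    and s: "4 < s" "s < B a t powr (1/6)"
  shows "cmod (\<Sum>k. if \<bar>real k - A a t\<bar> > s * sqrt (B a t)
                   then complex_of_real ((a k)\<^sup>2) * exp (of_nat k * \<tau>) else 0)
         \<le> 2 * H a (Re \<tau>) * exp (- ((s - 4)\<^sup>2) / 8)"
proof -
  interpret nontrivial_entire_coeffs a
    using entire inf_nz by unfold_locales (auto dest: infinite_imp_nonempty)
  have l: "4 \<le> real l" using l4 by simp
  have B_l: "B a (tl l) = real l ^ 6"
    using tl_def[OF l_ex] .
  have "\<exists>y. B a y = real (l + 1) ^ 6"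
    by (rule continuous_unbounded_above_attains[OF continuous_on_B B_unbdd, of "tl l"])
      (simp add: B_l power_mono)
  then have "B a (tl (l + 1)) = real (l + 1) ^ 6"
    by (rule tl_def)
  then have B_Suc_l: "B a (tl (l + 1)) = (real l + 1) ^ 6"
    by (simp add: add.commute)
  have t_window: "tl l + 2 / (real l)\<^sup>2 \<le> t" "t + 2 / (real l)\<^sup>2 \<le> tl (l + 1)"
    using t_int by simp_all
  moreover have "0 \<le> 2 / (real l)\<^sup>2"
    by simp
  ultimately have "B a (tl l) \<le> B a t"
    by (intro monoD[OF B_mono]) linarith
  then have B_t: "real l ^ 6 \<le> B a t"
    by (simp only: B_l)
  have B_pos: "0 < B a t"
    using l by (intro less_le_trans[OF _ B_t]) simp
  have "s / sqrt (B a t) \<le> 1 / (real l)\<^sup>2"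
    using divide_sqrt_le_of_sixth_roots[OF _ B_t] s l by simp
  also have "\<dots> \<le> 2 / (real l)\<^sup>2"
    by (simp add: divide_right_mono)
  finally have "\<bar>B a u\<bar> \<le> 4 * B a t" if "\<bar>u - t\<bar> \<le> s / sqrt (B a t)" for u
    using mono_window_bound[OF B_mono l B_l B_Suc_l t_window] that by simp
  moreover have "\<bar>Re \<tau> - t\<bar> < 1 / sqrt (B a t)"
    using tau abs_Re_le_cmod[of "\<tau> - t"] by simp
  ultimately show ?thesis
    using norm_tail_le[OF B_pos s(1)] by blast
qed

end
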